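(* Let $G$ be a compact group, $H$ a normal subgroup of $G$, $K=G/H$ with quotient map $g\mapsto[g]$. Let $(l_n)_{n\in\mathbb{N}}$ be continuous length functions on $G$ converging uniformly on $G$ to a function $\widetilde{l_\infty}$ with $\widetilde{l_\infty}(g)=0$ for $g\in H$ and $\widetilde{l_\infty}(g)>0$ for $g\notin H$. Then there exists a continuous length function $l_\infty$ on $K$ such that $l_n(g)\to l_\infty([g])$ as $n\to\infty$ for all $g\in G$.
   Context: A length function on a group with unit $e$: $l\ge0$, $l(g)=0$ iff $g=e$, $l(g^{-1})=l(g)$, $l(gh)\le l(g)+l(h)$. *)

theory Defs
  imports "HOL-Analysis.Analysis" "HOL-Algebra.Coset"
begin

definition length_function :: "('a, 'b) monoid_scheme \<Rightarrow> ('a \<Rightarrow> real) \<Rightarrow> bool" where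
  "length_function G l \<longleftrightarrow>
     (\<forall>g\<in>carrier G. 0 \<le> l g) \<and>
     (\<forall>g\<in>carrier G. l g = 0 \<longleftrightarrow> g = \<one>\<^bsub>G\<^esub>) \<and>
     (\<forall>g\<in>carrier G. l (inv\<^bsub>G\<^esub> g) = l g) \<and>
     (\<forall>g\<in>carrier G. \<forall>h\<in>carrier G. l (g \<otimes>\<^bsub>G\<^esub> h) \<le> l g + l h)"

definition topological_group :: "('a, 'b) monoid_scheme \<Rightarrow> 'a topology \<Rightarrow> bool" where
  "topological_group G T \<longleftrightarrow>
     group G \<and> topspace T = carrier G \<and>
     continuous_map (prod_topology T T) T (\<lambda>(x, y). x \<otimes>\<^bsub>G\<^esub> y) \<and>
     continuous_map T T (\<lambda>x. inv\<^bsub>G\<^esub> x)"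

definition compact_group :: "('a, 'b) monoid_scheme \<Rightarrow> 'a topology \<Rightarrow> bool" where
  "compact_group G T \<longleftrightarrow> topological_group G T \<and> compact_space T \<and> Hausdorff_space T"

definition quotient_top :: "'a topology \<Rightarrow> ('a \<Rightarrow> 'c) \<Rightarrow> 'c set \<Rightarrow> 'c topology" where
  "quotient_top T q B = topology (\<lambda>U. U \<subseteq> B \<and> openin T {x \<in> topspace T. q x \<in> U})"

end

theory Submission
  imports Defs
begin

text \<open>The uniform limit \<open>L\<close> is continuous and, as a pointwise limit of length functions,
  nonnegative, symmetric and subadditive. Subadditivity and \<open>L = 0\<close> on \<open>H\<close> give
  \<open>L (h \<otimes> g) = L g\<close> for \<open>h \<in> H\<close>, so \<open>L\<close> is constant on the cosets of \<open>H\<close> and descends to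
  a function on \<open>G/H\<close>; it vanishes only at the identity coset because \<open>L > 0\<close> off \<open>H\<close>, and it
  is continuous for the quotient topology because its composite with the quotient map is \<open>L\<close>.\<close>

lemma istopology_quotient_top:
  "istopology (\<lambda>U. U \<subseteq> B \<and> openin T {x \<in> topspace T. q x \<in> U})"
  unfolding istopology_def
proof (rule conjI; intro allI impI)
  fix S S'
  assume S: "S \<subseteq> B \<and> openin T {x \<in> topspace T. q x \<in> S}"
    and S': "S' \<subseteq> B \<and> openin T {x \<in> topspace T. q x \<in> S'}"
  show "S \<inter> S' \<subseteq> B \<and> openin T {x \<in> topspace T. q x \<in> S \<inter> S'}"
  proof
    show "S \<inter> S' \<subseteq> B"
      using S by blast
    have "openin T ({x \<in> topspace T. q x \<in> S} \<inter> {x \<in> topspace T. q x \<in> S'})"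
      using S S' by (intro openin_Int) blast+
    also have "{x \<in> topspace T. q x \<in> S} \<inter> {x \<in> topspace T. q x \<in> S'} =
        {x \<in> topspace T. q x \<in> S \<inter> S'}"
      by blast
    finally show "openin T {x \<in> topspace T. q x \<in> S \<inter> S'}" .
  qed
next
  fix \<U>
  assume \<U>: "\<forall>S\<in>\<U>. S \<subseteq> B \<and> openin T {x \<in> topspace T. q x \<in> S}"
  show "\<Union>\<U> \<subseteq> B \<and> openin T {x \<in> topspace T. q x \<in> \<Union>\<U>}"
  proof
    show "\<Union>\<U> \<subseteq> B"
      using \<U> by blast
    have "openin T (\<Union>S\<in>\<U>. {x \<in> topspace T. q x \<in> S})"
      using \<U> by (intro openin_Union) blast
    also have "(\<Union>S\<in>\<U>. {x \<in> topspace T. q x \<in> S}) = {x \<in> topspace T. q x \<in> \<Union>\<U>}"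
      by blast
    finally show "openin T {x \<in> topspace T. q x \<in> \<Union>\<U>}" .
  qed
qed

lemma openin_quotient_top:
  "openin (quotient_top T q B) U \<longleftrightarrow> U \<subseteq> B \<and> openin T {x \<in> topspace T. q x \<in> U}"
  unfolding quotient_top_def topology_inverse'[OF istopology_quotient_top] ..

lemma topspace_quotient_top:
  assumes "q ` topspace T \<subseteq> B"
  shows "topspace (quotient_top T q B) = B"
proof (rule subset_antisym)
  show "topspace (quotient_top T q B) \<subseteq> B"
    unfolding topspace_def openin_quotient_top by blast
  have "{x \<in> topspace T. q x \<in> B} = topspace T"
    using assms by blast
  then have "openin (quotient_top T q B) B"
    by (simp add: openin_quotient_top)
  then show "B \<subseteq> topspace (quotient_top T q B)"
    by (rule openin_subset)
qed

lemma continuous_map_quotient_top: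
  assumes "q ` topspace T \<subseteq> B" and "f \<in> B \<rightarrow> topspace U"
    and "continuous_map T U (f \<circ> q)"
  shows "continuous_map (quotient_top T q B) U f"
  unfolding continuous_map_def topspace_quotient_top[OF assms(1)]
proof (intro conjI allI impI)
  show "f \<in> B \<rightarrow> topspace U"
    by (rule assms(2))
  fix V
  assume "openin U V"
  then have "openin T {x \<in> topspace T. f (q x) \<in> V}"
    using assms(3) by (simp add: continuous_map_def)
  moreover have "{x \<in> topspace T. q x \<in> {C \<in> B. f C \<in> V}} = {x \<in> topspace T. f (q x) \<in> V}"
    using assms(1) by blast
  ultimately show "openin (quotient_top T q B) {C \<in> B. f C \<in> V}"
    by (simp add: openin_quotient_top)
qed

lemma continuous_map_uniform_limit_metric:
  fixes f :: "'i \<Rightarrow> 'a \<Rightarrow> 'b::metric_space"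
  assumes "\<forall>\<^sub>F n in F. continuous_map X euclidean (f n)"
    and "uniform_limit (topspace X) f g F" and "F \<noteq> bot"
  shows "continuous_map X euclidean g"
  using Met_TC.continuous_map_uniform_limit_alt[where F=F and X=X and f=f and g=g] assms
  by (simp add: uniform_limit_iff)

definition pseudo_length_function :: "('a, 'b) monoid_scheme \<Rightarrow> ('a \<Rightarrow> real) \<Rightarrow> bool" where
  "pseudo_length_function G l \<longleftrightarrow>
     (\<forall>g\<in>carrier G. 0 \<le> l g) \<and> l \<one>\<^bsub>G\<^esub> = 0 \<and>
     (\<forall>g\<in>carrier G. l (inv\<^bsub>G\<^esub> g) = l g) \<and>
     (\<forall>g\<in>carrier G. \<forall>h\<in>carrier G. l (g \<otimes>\<^bsub>G\<^esub> h) \<le> l g + l h)"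

lemma (in group) length_function_imp_pseudo_length_function:
  "length_function G l \<Longrightarrow> pseudo_length_function G l"
  by (simp add: length_function_def pseudo_length_function_def)

lemma (in group) pseudo_length_function_limit:
  assumes "\<And>n. pseudo_length_function G (l n)"
    and lim: "\<And>g. g \<in> carrier G \<Longrightarrow> (\<lambda>n. l n g) \<longlonglongrightarrow> L g"
  shows "pseudo_length_function G L"
  unfolding pseudo_length_function_def
proof (intro conjI ballI)
  fix g h
  assume g: "g \<in> carrier G"
  have l: "0 \<le> l n g" "l n (inv g) = l n g" for n
    using assms(1) g by (simp_all add: pseudo_length_function_def)
  show "0 \<le> L g"
    using l(1) by (intro LIMSEQ_le_const[OF lim[OF g]]) blast
  show "L (inv g) = L g"
    using lim[OF inv_closed[OF g]] lim[OF g] l(2) by (simp add: LIMSEQ_unique)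
  assume h: "h \<in> carrier G"
  show "L (g \<otimes> h) \<le> L g + L h"
    using assms(1) g h
    by (intro LIMSEQ_le[OF lim tendsto_add[OF lim lim]]) (simp_all add: pseudo_length_function_def)
next
  have "l n \<one> = 0" for n
    using assms(1) by (simp add: pseudo_length_function_def)
  then show "L \<one> = 0"
    using lim[OF one_closed] by (simp add: LIMSEQ_const_iff)
qed

lemma (in group) pseudo_length_function_mult_zero_left:
  assumes L: "pseudo_length_function G L"
    and h: "h \<in> carrier G" "L h = 0" and g: "g \<in> carrier G"
  shows "L (h \<otimes> g) = L g"
proof (rule antisym)
  have tri: "L (x \<otimes> y) \<le> L x + L y" if "x \<in> carrier G" "y \<in> carrier G" for x y
    using L that by (simp add: pseudo_length_function_def)
  show "L (h \<otimes> g) \<le> L g"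
    using tri[OF h(1) g] h(2) by simp
  have "L (inv h \<otimes> (h \<otimes> g)) \<le> L (inv h) + L (h \<otimes> g)"
    using h g by (intro tri) simp_all
  moreover have "L (inv h) = 0"
    using L h by (simp add: pseudo_length_function_def)
  ultimately show "L g \<le> L (h \<otimes> g)"
    using h g by (simp add: m_assoc[symmetric])
qed

lemma (in subgroup) pseudo_length_function_rcos_const:
  assumes "group G" and L: "pseudo_length_function G L"
    and zero: "\<And>h. h \<in> H \<Longrightarrow> L h = 0" and g: "g \<in> carrier G"
  shows "the_elem (L ` (H #> g)) = L g"
proof (rule the_elem_image_unique)
  show "H #> g \<noteq> {}"
    using group.rcos_self[OF assms(1) g subgroup_axioms] by auto
  fix x
  assume "x \<in> H #> g"
  then obtain h where h: "h \<in> H" and x: "x = h \<otimes> g"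
    unfolding r_coset_def by blast
  show "L x = L g"
    unfolding x
    by (rule group.pseudo_length_function_mult_zero_left[OF assms(1) L mem_carrier[OF h] zero[OF h] g])
qed

lemma (in normal) length_function_FactGroup:
  assumes L: "pseudo_length_function G L"
    and kernel: "\<And>g. g \<in> carrier G \<Longrightarrow> L g = 0 \<longleftrightarrow> g \<in> H"
  shows "length_function (G Mod H) (\<lambda>C. the_elem (L ` C))"
proof -
  have rcos: "the_elem (L ` (H #> g)) = L g" if "g \<in> carrier G" for g
    using pseudo_length_function_rcos_const[OF is_group L _ that] by (simp add: kernel mem_carrier)
  have rcos_eq_H: "H #> g = H \<longleftrightarrow> g \<in> H" if "g \<in> carrier G" for g
  proof
    assume "H #> g = H"
    then show "g \<in> H"
      using rcos_self[OF that subgroup_axioms] by simp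
  qed (rule coset_join2[OF that subgroup_axioms])
  have nonneg: "0 \<le> L g" and inv: "L (inv g) = L g" if "g \<in> carrier G" for g
    using L that by (simp_all add: pseudo_length_function_def)
  have tri: "L (g \<otimes> h) \<le> L g + L h" if "g \<in> carrier G" "h \<in> carrier G" for g h
    using L that by (simp add: pseudo_length_function_def)
  have quotient_cases: "(\<And>g. g \<in> carrier G \<Longrightarrow> C = H #> g \<Longrightarrow> P) \<Longrightarrow> P"
    if "C \<in> carrier (G Mod H)" for C P
    using that by (auto simp: carrier_FactGroup)
  show ?thesis
    unfolding length_function_def
  proof (intro conjI ballI)
    fix C
    assume "C \<in> carrier (G Mod H)"
    then obtain g where g: "g \<in> carrier G" and C: "C = H #> g"
      by (rule quotient_cases)
    show "0 \<le> the_elem (L ` C)"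
      using g by (simp add: C rcos nonneg)
    show "the_elem (L ` C) = 0 \<longleftrightarrow> C = \<one>\<^bsub>G Mod H\<^esub>"
      using g by (simp add: C rcos kernel rcos_eq_H)
    have "inv\<^bsub>G Mod H\<^esub> C = H #> inv g"
      using inv_FactGroup \<open>C \<in> carrier (G Mod H)\<close> g by (simp add: C rcos_inv)
    then show "the_elem (L ` (inv\<^bsub>G Mod H\<^esub> C)) = the_elem (L ` C)"
      using g by (simp add: C rcos inv)
  next
    fix C D
    assume "C \<in> carrier (G Mod H)" "D \<in> carrier (G Mod H)"
    then obtain g h where g: "g \<in> carrier G" "C = H #> g" and h: "h \<in> carrier G" "D = H #> h"
      by (metis quotient_cases)
    have "C \<otimes>\<^bsub>G Mod H\<^esub> D = H #> (g \<otimes> h)"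
      using g h by (simp add: rcos_sum)
    then show "the_elem (L ` (C \<otimes>\<^bsub>G Mod H\<^esub> D)) \<le> the_elem (L ` C) + the_elem (L ` D)"
      using g h by (simp add: rcos tri)
  qed
qed

theorem mainTheorem16:
  fixes G :: "('a, 'b) monoid_scheme" and T :: "'a topology"
    and H :: "'a set" and l :: "nat \<Rightarrow> 'a \<Rightarrow> real" and L :: "'a \<Rightarrow> real"
  assumes "compact_group G T"
    and "H \<lhd> G"
    and "\<And>n. length_function G (l n)"
    and "\<And>n. continuous_map T euclideanreal (l n)"
    and "uniform_limit (carrier G) l L sequentially"
    and "\<And>g. g \<in> H \<Longrightarrow> L g = 0"
    and "\<And>g. g \<in> carrier G \<Longrightarrow> g \<notin> H \<Longrightarrow> L g > 0"
  shows "\<exists>Linf :: 'a set \<Rightarrow> real.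
           length_function (G Mod H) Linf \<and>
           continuous_map (quotient_top T (\<lambda>g. H #>\<^bsub>G\<^esub> g) (carrier (G Mod H))) euclideanreal Linf \<and>
           (\<forall>g\<in>carrier G. (\<lambda>n. l n g) \<longlonglongrightarrow> Linf (H #>\<^bsub>G\<^esub> g))"
proof -
  interpret normal H G by (rule assms(2))
  have top: "topspace T = carrier G"
    using assms(1) by (simp add: compact_group_def topological_group_def)
  have lim: "(\<lambda>n. l n g) \<longlonglongrightarrow> L g" if "g \<in> carrier G" for g
    using assms(5) that by (rule tendsto_uniform_limitI)
  have L: "pseudo_length_function G L"
    using length_function_imp_pseudo_length_function[OF assms(3)] lim
    by (rule pseudo_length_function_limit)
  have kernel: "L g = 0 \<longleftrightarrow> g \<in> H" if "g \<in> carrier G" for g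
    using assms(6)[of g] assms(7)[OF that] by fastforce
  define Linf where "Linf C = the_elem (L ` C)" for C
  have Linf_rcos: "Linf (H #>\<^bsub>G\<^esub> g) = L g" if "g \<in> carrier G" for g
    unfolding Linf_def using pseudo_length_function_rcos_const[OF is_group L assms(6) that] .
  have "continuous_map T euclideanreal L"
    using assms(4,5) top by (intro continuous_map_uniform_limit_metric) auto
  then have "continuous_map T euclideanreal (Linf \<circ> (\<lambda>g. H #>\<^bsub>G\<^esub> g))"
    by (rule continuous_map_eq) (simp add: top Linf_rcos)
  then have "continuous_map (quotient_top T (\<lambda>g. H #>\<^bsub>G\<^esub> g) (carrier (G Mod H))) euclideanreal Linf"
    by (intro continuous_map_quotient_top) (auto simp: top carrier_FactGroup)
  moreover have "length_function (G Mod H) Linf"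
    unfolding Linf_def using length_function_FactGroup[OF L kernel] .
  ultimately show ?thesis
    using lim Linf_rcos by auto
qed

end
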